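(* Let $b_1,b_2,b_3\in\mathbb{R}$ with $b_1b_2b_3\neq0$ and consider the system $$\dot x_1=b_1x_2,\qquad \dot x_2=b_2x_1x_3,\qquad \dot x_3=b_3x_1x_2 .$$ Let $m\in\mathbb{R}\setminus\{0\}$ with $mb_1b_2<0$. Then the equilibrium state $e_3^m=(0,0,m)$ is nonlinear stable.
   Context: Nonlinear stable means stable in the sense of Lyapunov: for every neighbourhood $U$ of the equilibrium there is a neighbourhood $V$ such that every trajectory starting in $V$ remains in $U$ for all $t\ge0$. *)

theory Defs
  imports "HOL-Analysis.Analysis"
begin

definition vf :: "real \<Rightarrow> real \<Rightarrow> real \<Rightarrow> real \<times> real \<times> real \<Rightarrow> real \<times> real \<times> real" where
  "vf b1 b2 b3 = (\<lambda>(x1, x2, x3). (b1 * x2, b2 * x1 * x3, b3 * x1 * x2))"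

definition trajectory_on ::
  "('a::real_normed_vector \<Rightarrow> 'a) \<Rightarrow> real \<Rightarrow> (real \<Rightarrow> 'a) \<Rightarrow> bool" where
  "trajectory_on f T x \<longleftrightarrow>
     (\<forall>t\<in>{0..T}. (x has_vector_derivative f (x t)) (at t within {0..T}))"

text \<open>Lyapunov (nonlinear) stability of an equilibrium e: for every neighbourhood U of e
  there is a neighbourhood V of e such that every trajectory starting in V stays in U for
  all t \<ge> 0 (as long as it is defined, i.e. on every interval [0,T] on which it exists).\<close>
definition nonlinear_stable :: "('a::real_normed_vector \<Rightarrow> 'a) \<Rightarrow> 'a \<Rightarrow> bool" where
  "nonlinear_stable f e \<longleftrightarrow>
     (\<forall>U. open U \<and> e \<in> U \<longrightarrow>
        (\<exists>V. open V \<and> e \<in> V \<and>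
           (\<forall>T x. 0 \<le> T \<and> trajectory_on f T x \<and> x 0 \<in> V \<longrightarrow> (\<forall>t\<in>{0..T}. x t \<in> U))))"

end

theory Submission
  imports Defs
begin

text \<open>Energy--Casimir method. Along trajectories the quantities b3 x1^2 - 2 b1 x3 and
  b3 x2^2 - b2 x3^2 are conserved. For a = -b2 m / b1, which is positive exactly when
  m b1 b2 < 0, the combination of their deviations from the values at (0, 0, m) has no term
  linear in x3 - m; adding a large multiple mu of the squared deviation of the first one yields
  x2^2 + a x1^2 - (b2/b3) (x3 - m)^2 + mu (x1^2 - 2 (b1/b3) (x3 - m))^2, which near the
  equilibrium dominates a positive multiple of the squared distance to it (the quartic error
  mu x1^4 is absorbed by a x1^2). A conserved function with such a lower bound confines
  trajectories to small balls.\<close>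

lemma lyapunov_stable:
  fixes f :: "'a::real_normed_vector \<Rightarrow> 'a" and V :: "'a \<Rightarrow> real"
  assumes contV: "continuous (at e) V" and V0: "V e = 0"
    and nonincreasing: "\<And>T x t. trajectory_on f T x \<Longrightarrow> t \<in> {0..T} \<Longrightarrow> V (x t) \<le> V (x 0)"
    and r: "r > 0" and c: "c > 0"
    and coercive: "\<And>y. dist y e \<le> r \<Longrightarrow> c * (dist y e)\<^sup>2 \<le> V y"
  shows "nonlinear_stable f e"
  unfolding nonlinear_stable_def
proof (intro allI impI)
  fix U assume "open U \<and> e \<in> U"
  then obtain \<epsilon> where \<epsilon>: "\<epsilon> > 0" "ball e \<epsilon> \<subseteq> U" using open_contains_ball by blast
  define \<rho> where "\<rho> = min \<epsilon> r / 2"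
  have \<rho>: "\<rho> > 0" "\<rho> < \<epsilon>" "\<rho> \<le> r" using \<epsilon> r by (auto simp: \<rho>_def)
  obtain \<delta> where \<delta>: "\<delta> > 0" "\<And>y. dist y e < \<delta> \<Longrightarrow> dist (V y) (V e) < c * \<rho>\<^sup>2"
    using contV c \<rho> unfolding continuous_at_eps_delta by (metis mult_pos_pos zero_less_power)
  show "\<exists>W. open W \<and> e \<in> W \<and>
          (\<forall>T x. 0 \<le> T \<and> trajectory_on f T x \<and> x 0 \<in> W \<longrightarrow> (\<forall>t\<in>{0..T}. x t \<in> U))"
  proof (intro exI[of _ "ball e (min \<delta> \<rho>)"] conjI allI impI ballI)
    show "open (ball e (min \<delta> \<rho>))" "e \<in> ball e (min \<delta> \<rho>)" using \<delta> \<rho> by auto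
    fix T x t assume H: "0 \<le> T \<and> trajectory_on f T x \<and> x 0 \<in> ball e (min \<delta> \<rho>)"
      and t: "t \<in> {0..T}"
    have contx: "continuous_on {0..t} x"
      using H t unfolding trajectory_on_def
      by (intro continuous_on_vector_derivative continuous_on_subset[of "{0..T}"]) auto
    have x0: "dist (x 0) e < \<delta>" "dist (x 0) e < \<rho>" using H by (auto simp: dist_commute)
    have "V (x 0) < c * \<rho>\<^sup>2" using \<delta>(2)[OF x0(1)] V0 by simp
    have "dist (x t) e < \<rho>"
    proof (rule ccontr)
      assume "\<not> dist (x t) e < \<rho>"
      moreover have "continuous_on {0..t} (\<lambda>s. dist (x s) e)"
        using contx by (intro continuous_intros)
      ultimately obtain s where s: "0 \<le> s" "s \<le> t" "dist (x s) e = \<rho>"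
        using IVT'[of "\<lambda>s. dist (x s) e" 0 \<rho> t] x0 t by auto
      have "c * \<rho>\<^sup>2 \<le> V (x s)" using coercive[of "x s"] s \<rho> by simp
      also have "V (x s) \<le> V (x 0)" using nonincreasing[of T x s] H s t by auto
      finally show False using \<open>V (x 0) < c * \<rho>\<^sup>2\<close> by simp
    qed
    then show "x t \<in> U" using \<epsilon> \<rho> by (auto simp: dist_commute)
  qed
qed

lemma first_integral_constant:
  fixes f :: "'a::real_normed_vector \<Rightarrow> 'a" and H :: "'a \<Rightarrow> real"
  assumes H': "\<And>y. (H has_derivative H' y) (at y)" and orth: "\<And>y. H' y (f y) = 0"
    and x: "trajectory_on f T x" and t: "t \<in> {0..T}"
  shows "H (x t) = H (x 0)"
proof -
  have "((\<lambda>s. H (x s)) has_derivative (\<lambda>_. 0)) (at u within {0..T})" if u: "u \<in> {0..T}" for u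
  proof -
    have "(x has_derivative (\<lambda>h. h *\<^sub>R f (x u))) (at u within {0..T})"
      using x u unfolding trajectory_on_def has_vector_derivative_def by blast
    from has_derivative_compose[OF this H'[of "x u"]]
    have "((\<lambda>s. H (x s)) has_derivative (\<lambda>h. H' (x u) (h *\<^sub>R f (x u)))) (at u within {0..T})" .
    moreover have "H' (x u) (h *\<^sub>R f (x u)) = 0" for h
      using linear_scale[OF has_derivative_linear[OF H'[of "x u"]]] orth by simp
    ultimately show ?thesis by simp
  qed
  then obtain C where "\<forall>u\<in>{0..T}. H (x u) = C"
    using has_derivative_zero_constant[of "{0..T}" "\<lambda>s. H (x s)"] by auto
  then show ?thesis using t by auto
qed

definition casimir1 :: "real \<Rightarrow> real \<Rightarrow> real \<times> real \<times> real \<Rightarrow> real" where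
  "casimir1 b1 b3 = (\<lambda>(x1, x2, x3). b3 * x1\<^sup>2 - 2 * b1 * x3)"

definition casimir2 :: "real \<Rightarrow> real \<Rightarrow> real \<times> real \<times> real \<Rightarrow> real" where
  "casimir2 b2 b3 = (\<lambda>(x1, x2, x3). b3 * x2\<^sup>2 - b2 * x3\<^sup>2)"

lemma casimir1_conserved:
  assumes "trajectory_on (vf b1 b2 b3) T x" and "t \<in> {0..T}"
  shows "casimir1 b1 b3 (x t) = casimir1 b1 b3 (x 0)"
proof (rule first_integral_constant[OF _ _ assms])
  show "(casimir1 b1 b3 has_derivative (\<lambda>h. 2 * b3 * fst y * fst h - 2 * b1 * snd (snd h))) (at y)"
    for y
    unfolding casimir1_def split_beta by (auto intro!: derivative_eq_intros)
  show "2 * b3 * fst y * fst (vf b1 b2 b3 y) - 2 * b1 * snd (snd (vf b1 b2 b3 y)) = 0" for y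
    by (simp add: vf_def split_beta)
qed

lemma casimir2_conserved:
  assumes "trajectory_on (vf b1 b2 b3) T x" and "t \<in> {0..T}"
  shows "casimir2 b2 b3 (x t) = casimir2 b2 b3 (x 0)"
proof (rule first_integral_constant[OF _ _ assms])
  show "(casimir2 b2 b3 has_derivative
          (\<lambda>h. 2 * b3 * fst (snd y) * fst (snd h) - 2 * b2 * snd (snd y) * snd (snd h))) (at y)"
    for y
    unfolding casimir2_def split_beta by (auto intro!: derivative_eq_intros)
  show "2 * b3 * fst (snd y) * fst (snd (vf b1 b2 b3 y))
          - 2 * b2 * snd (snd y) * snd (snd (vf b1 b2 b3 y)) = 0" for y
    by (simp add: vf_def split_beta)
qed

definition energy_casimir :: "real \<Rightarrow> real \<Rightarrow> real \<Rightarrow> real \<Rightarrow> real \<Rightarrow> real \<times> real \<times> real \<Rightarrow> real"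
  where "energy_casimir a c d \<mu> m =
    (\<lambda>(x1, x2, x3). x2\<^sup>2 + a * x1\<^sup>2 - c * (x3 - m)\<^sup>2 + \<mu> * (x1\<^sup>2 - d * (x3 - m))\<^sup>2)"

lemma energy_casimir_eq_casimirs:
  assumes "b3 \<noteq> 0" and "a * b1 = - b2 * m"
  shows "energy_casimir a (b2 / b3) (2 * b1 / b3) \<mu> m y =
    (casimir2 b2 b3 y - casimir2 b2 b3 (0, 0, m) + a * (casimir1 b1 b3 y - casimir1 b1 b3 (0, 0, m))) / b3
    + \<mu> * ((casimir1 b1 b3 y - casimir1 b1 b3 (0, 0, m)) / b3)\<^sup>2"
proof -
  obtain x1 x2 x3 where y: "y = (x1, x2, x3)" by (cases y) auto
  show ?thesis using assms(1)
    by (simp add: y energy_casimir_def casimir1_def casimir2_def field_simps power2_eq_square)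
      (use assms(2) in algebra)
qed

lemma square_diff_ge: "v\<^sup>2 / 2 - u\<^sup>2 \<le> (u - v)\<^sup>2" for u v :: real
proof -
  have "0 \<le> (2 * u - v)\<^sup>2 / 2" by simp
  then show ?thesis by (simp add: power2_eq_square algebra_simps)
qed

lemma energy_casimir_coercive:
  assumes a: "a > 0" and \<mu>: "\<mu> > 0" and \<mu>d: "\<mu> * d\<^sup>2 = 2 * (\<bar>c\<bar> + 1)"
    and near: "dist y (0, 0, m) \<le> sqrt (a / (2 * \<mu>))"
  shows "min (a / 2) 1 * (dist y (0, 0, m))\<^sup>2 \<le> energy_casimir a c d \<mu> m y"
proof -
  obtain x1 x2 x3 where y: "y = (x1, x2, x3)" by (cases y) auto
  define w where "w = x3 - m"
  have dist2: "(dist y (0, 0, m))\<^sup>2 = x1\<^sup>2 + x2\<^sup>2 + w\<^sup>2"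
    by (simp add: y w_def dist_Pair_Pair dist_real_def)
  have "x1\<^sup>2 \<le> (dist y (0, 0, m))\<^sup>2" using dist2 by simp
  also have "\<dots> \<le> a / (2 * \<mu>)"
    using power_mono[OF near, of 2] a \<mu> by simp
  finally have "\<mu> * x1\<^sup>2 \<le> a / 2"
    using \<mu> by (simp add: field_simps)
  then have quartic: "\<mu> * x1\<^sup>2 * x1\<^sup>2 \<le> a / 2 * x1\<^sup>2"
    by (rule mult_right_mono) simp
  have "(\<bar>c\<bar> + 1) * w\<^sup>2 - \<mu> * x1\<^sup>2 * x1\<^sup>2 = (\<mu> * d\<^sup>2) * w\<^sup>2 / 2 - \<mu> * (x1\<^sup>2)\<^sup>2"
    using \<mu>d by (simp add: power2_eq_square)
  also have "\<dots> = \<mu> * ((d * w)\<^sup>2 / 2 - (x1\<^sup>2)\<^sup>2)"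
    by (simp add: power_mult_distrib algebra_simps)
  also have "\<dots> \<le> \<mu> * (x1\<^sup>2 - d * w)\<^sup>2"
    using \<mu> by (intro mult_left_mono square_diff_ge) simp
  finally have casimir_term: "(\<bar>c\<bar> + 1) * w\<^sup>2 - \<mu> * x1\<^sup>2 * x1\<^sup>2 \<le> \<mu> * (x1\<^sup>2 - d * w)\<^sup>2" .
  have "- \<bar>c\<bar> * w\<^sup>2 \<le> - c * w\<^sup>2" by (simp add: mult_right_mono)
  then have "x2\<^sup>2 + a / 2 * x1\<^sup>2 + w\<^sup>2 \<le> energy_casimir a c d \<mu> m y"
    using quartic casimir_term by (simp add: y w_def energy_casimir_def algebra_simps)
  moreover have "min (a / 2) 1 * (x1\<^sup>2 + x2\<^sup>2 + w\<^sup>2) \<le> x2\<^sup>2 + a / 2 * x1\<^sup>2 + w\<^sup>2"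
    using mult_right_mono[OF min.cobounded1 zero_le_power2, of "a / 2" 1 x1]
      mult_right_mono[OF min.cobounded2 zero_le_power2, of "a / 2" 1 x2]
      mult_right_mono[OF min.cobounded2 zero_le_power2, of "a / 2" 1 w]
    by (simp add: distrib_left)
  ultimately show ?thesis using dist2 by simp
qed

theorem proposition4p4:
  fixes b1 b2 b3 m :: real
  assumes "b1 * b2 * b3 \<noteq> 0"
    and "m \<noteq> 0"
    and "m * b1 * b2 < 0"
  shows "nonlinear_stable (vf b1 b2 b3) (0, 0, m)"
proof -
  have b1: "b1 \<noteq> 0" and b3: "b3 \<noteq> 0" using assms(1) by auto
  define a where "a = - b2 * m / b1"
  define c where "c = b2 / b3"
  define d where "d = 2 * b1 / b3"
  define \<mu> where "\<mu> = 2 * (\<bar>c\<bar> + 1) / d\<^sup>2"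
  have a: "a > 0" "a * b1 = - b2 * m"
    using assms(3) b1 by (auto simp: a_def field_simps zero_less_mult_iff mult_less_0_iff)
  have \<mu>: "\<mu> > 0" "\<mu> * d\<^sup>2 = 2 * (\<bar>c\<bar> + 1)"
    using b1 b3 by (auto simp: \<mu>_def d_def)
  show ?thesis
  proof (rule lyapunov_stable[where V = "energy_casimir a c d \<mu> m"])
    show "continuous (at (0, 0, m)) (energy_casimir a c d \<mu> m)"
      unfolding energy_casimir_def split_beta by (intro continuous_intros)
    show "energy_casimir a c d \<mu> m (x t) \<le> energy_casimir a c d \<mu> m (x 0)"
      if "trajectory_on (vf b1 b2 b3) T x" "t \<in> {0..T}" for T x t
      using casimir1_conserved[OF that] casimir2_conserved[OF that]
      by (simp add: c_def d_def energy_casimir_eq_casimirs[OF b3 a(2)])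
    show "min (a / 2) 1 * (dist y (0, 0, m))\<^sup>2 \<le> energy_casimir a c d \<mu> m y"
      if "dist y (0, 0, m) \<le> sqrt (a / (2 * \<mu>))" for y
      using energy_casimir_coercive[OF a(1) \<mu> that] .
  qed (use a \<mu> in \<open>auto simp: energy_casimir_def\<close>)
qed

end
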